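(* A countably infinite graph $G$ is HE-homogeneous if and only if it is HH-homogeneous and the following two conditions hold: (1) $\mathcal{H}(G)\cap\overline{\mathcal{H}}(G)=\varnothing$; (2) $\mathcal{H}(G)$ is downward-closed in $(\mathrm{Age}(G),\preceq)$ (equivalently, $\overline{\mathcal{H}}(G)$ is upward-closed in $(\mathrm{Age}(G),\preceq)$).
   Context: All graphs are undirected and loopless; subgraphs are induced. A homomorphism maps adjacent vertices to adjacent vertices. $G$ is HH-homogeneous (resp. HE-homogeneous) if every homomorphism between finite induced subgraphs of $G$ is the restriction of an endomorphism (resp. surjective endomorphism) of $G$. $\mathrm{Age}(G)$ is the class of (isomorphism types of) finite graphs embeddable in $G$ as induced subgraphs. A co-cone over a finite $X\subseteq G$ is a vertex $v\in G\setminus X$ adjacent to no vertex of $X$. $\mathcal H(G)$ is the set of $A\in\mathrm{Age}(G)$ for which there is an embedding $e:A\to G$ such that $G$ contains a co-cone over $e[A]$; $\overline{\mathcal H}(G)$ is the set of $A\in\mathrm{Age}(G)$ for which there is an embedding $e:A\to G$ such that no vertex of $G\setminus e[A]$ is a co-cone over $e[A]$. For $A,B\in\mathrm{Age}(G)$, $A\preceq B$ means there is a surjective homomorphism $A\to B$. A subset $X$ is downward-closed if $x\in X$ and $y\preceq x$ imply $y\in X$, and upward-closed if $y\in X$ and $y\preceq x$ imply $x\in X$. *)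

theory Defs
  imports Main "HOL-Library.Countable_Set"
begin

text \<open>The graph G has vertex type 'a (all of UNIV) and adjacency relation E.
Finite graphs (elements of the age) are pairs (V, R) with V a finite set of
naturals and R a symmetric irreflexive relation supported on V.\<close>

type_synonym fgraph = "nat set \<times> (nat \<Rightarrow> nat \<Rightarrow> bool)"

definition is_graph :: "('a \<Rightarrow> 'a \<Rightarrow> bool) \<Rightarrow> bool" where
  "is_graph E \<longleftrightarrow> (\<forall>x y. E x y \<longrightarrow> E y x) \<and> (\<forall>x. \<not> E x x)"

definition is_fgraph :: "fgraph \<Rightarrow> bool" where
  "is_fgraph A \<longleftrightarrow> finite (fst A)
     \<and> (\<forall>x y. snd A x y \<longrightarrow> x \<in> fst A \<and> y \<in> fst A)
     \<and> (\<forall>x y. snd A x y \<longrightarrow> snd A y x) \<and> (\<forall>x. \<not> snd A x x)"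

definition is_endo :: "('a \<Rightarrow> 'a \<Rightarrow> bool) \<Rightarrow> ('a \<Rightarrow> 'a) \<Rightarrow> bool" where
  "is_endo E g \<longleftrightarrow> (\<forall>x y. E x y \<longrightarrow> E (g x) (g y))"

definition hom_on :: "('a \<Rightarrow> 'a \<Rightarrow> bool) \<Rightarrow> 'a set \<Rightarrow> ('a \<Rightarrow> 'a) \<Rightarrow> bool" where
  "hom_on E X f \<longleftrightarrow> (\<forall>x\<in>X. \<forall>y\<in>X. E x y \<longrightarrow> E (f x) (f y))"

definition HH_homogeneous :: "('a \<Rightarrow> 'a \<Rightarrow> bool) \<Rightarrow> bool" where
  "HH_homogeneous E \<longleftrightarrow> (\<forall>X f. finite X \<and> hom_on E X f \<longrightarrow>
     (\<exists>g. is_endo E g \<and> (\<forall>x\<in>X. g x = f x)))"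

definition HE_homogeneous :: "('a \<Rightarrow> 'a \<Rightarrow> bool) \<Rightarrow> bool" where
  "HE_homogeneous E \<longleftrightarrow> (\<forall>X f. finite X \<and> hom_on E X f \<longrightarrow>
     (\<exists>g. is_endo E g \<and> surj g \<and> (\<forall>x\<in>X. g x = f x)))"

definition embedding :: "('a \<Rightarrow> 'a \<Rightarrow> bool) \<Rightarrow> fgraph \<Rightarrow> (nat \<Rightarrow> 'a) \<Rightarrow> bool" where
  "embedding E A e \<longleftrightarrow> inj_on e (fst A) \<and>
     (\<forall>x\<in>fst A. \<forall>y\<in>fst A. snd A x y \<longleftrightarrow> E (e x) (e y))"

definition Age :: "('a \<Rightarrow> 'a \<Rightarrow> bool) \<Rightarrow> fgraph set" where
  "Age E = {A. is_fgraph A \<and> (\<exists>e. embedding E A e)}"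

definition cocone :: "('a \<Rightarrow> 'a \<Rightarrow> bool) \<Rightarrow> 'a set \<Rightarrow> 'a \<Rightarrow> bool" where
  "cocone E X v \<longleftrightarrow> v \<notin> X \<and> (\<forall>x\<in>X. \<not> E v x)"

definition Hset :: "('a \<Rightarrow> 'a \<Rightarrow> bool) \<Rightarrow> fgraph set" where
  "Hset E = {A \<in> Age E. \<exists>e. embedding E A e \<and> (\<exists>v. cocone E (e ` fst A) v)}"

definition Hbar :: "('a \<Rightarrow> 'a \<Rightarrow> bool) \<Rightarrow> fgraph set" where
  "Hbar E = {A \<in> Age E. \<exists>e. embedding E A e \<and> \<not> (\<exists>v. cocone E (e ` fst A) v)}"

definition hom_le :: "fgraph \<Rightarrow> fgraph \<Rightarrow> bool" where
  "hom_le A B \<longleftrightarrow> (\<exists>h. h ` fst A = fst B \<and>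
     (\<forall>x\<in>fst A. \<forall>y\<in>fst A. snd A x y \<longrightarrow> snd B (h x) (h y)))"

definition downward_closed_in :: "fgraph set \<Rightarrow> fgraph set \<Rightarrow> bool" where
  "downward_closed_in S X \<longleftrightarrow> X \<subseteq> S \<and> (\<forall>x\<in>X. \<forall>y\<in>S. hom_le y x \<longrightarrow> y \<in> X)"

end

theory Submission
  imports Defs
begin

text \<open>Both sides of the equivalence are equivalent to the property that every homomorphism
\<open>\<psi>\<close> from a finite induced subgraph \<open>W\<close> reflects co-cones: if \<open>\<psi> ` W\<close> has a co-cone then so
does \<open>W\<close>. A surjective endomorphism extending \<open>\<psi>\<close> hits a co-cone \<open>v\<close> over \<open>\<psi> ` W\<close> from some
\<open>w\<close>, and \<open>w\<close> must be a co-cone over \<open>W\<close>. In terms of the age, reflection of co-cones says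
exactly that a graph without co-cone in one embedding has none in any embedding and that
\<open>\<preceq>\<close>-smaller graphs inherit co-cones. Conversely, given HH-homogeneity and reflection of
co-cones, a back-and-forth construction along an enumeration of \<open>G\<close> produces surjective
extensions: to put \<open>b\<close> into the range of a finite homomorphism \<open>h : D \<rightarrow> G\<close>, apply reflection
to the set \<open>Z\<close> of points of \<open>D\<close> whose images are not adjacent to \<open>b\<close>, enlarged by independent
co-cones already found, to obtain more than \<open>|D|\<close> co-cones over \<open>Z\<close>; one of them lies outside
\<open>D\<close> and can be sent to \<open>b\<close>.\<close>

definition hom_reflects_cocones :: "('a \<Rightarrow> 'a \<Rightarrow> bool) \<Rightarrow> bool" where
  "hom_reflects_cocones E \<longleftrightarrow> (\<forall>W \<psi>. finite W \<longrightarrow> hom_on E W \<psi> \<longrightarrow>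
     (\<exists>v. cocone E (\<psi> ` W) v) \<longrightarrow> (\<exists>u. cocone E W u))"

lemma is_graphD:
  assumes "is_graph E"
  shows "E x y \<Longrightarrow> E y x" and "\<not> E x x"
  using assms unfolding is_graph_def by blast+

lemma hom_on_subset: "hom_on E X f \<Longrightarrow> Y \<subseteq> X \<Longrightarrow> hom_on E Y f"
  unfolding hom_on_def by blast

lemma is_endo_imp_hom_on: "is_endo E g \<Longrightarrow> hom_on E X g"
  unfolding is_endo_def hom_on_def by blast

lemma HE_imp_HH: "HE_homogeneous E \<Longrightarrow> HH_homogeneous E"
  unfolding HE_homogeneous_def HH_homogeneous_def by blast

lemma HE_imp_hom_reflects_cocones:
  assumes HE: "HE_homogeneous E"
  shows "hom_reflects_cocones E"
  unfolding hom_reflects_cocones_def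
proof (intro allI impI)
  fix W \<psi> assume W: "finite W" and hom: "hom_on E W \<psi>" and "\<exists>v. cocone E (\<psi> ` W) v"
  then obtain v where v: "cocone E (\<psi> ` W) v" by blast
  obtain g where g: "is_endo E g" "surj g" "\<forall>x\<in>W. g x = \<psi> x"
    using HE W hom unfolding HE_homogeneous_def by blast
  obtain w where w: "v = g w" using \<open>surj g\<close> by (metis surjD)
  have "w \<notin> W" using g(3) v w unfolding cocone_def by auto
  moreover have "\<not> E w u" if "u \<in> W" for u
  proof
    assume "E w u"
    then have "E v (\<psi> u)" using g w \<open>u \<in> W\<close> unfolding is_endo_def by metis
    then show False using v \<open>u \<in> W\<close> unfolding cocone_def by blast
  qed
  ultimately show "\<exists>u. cocone E W u" unfolding cocone_def by blast
qed

subsection \<open>Reflection of co-cones in terms of the age\<close>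

lemma hom_le_embedded:
  assumes eA: "embedding E A eA" and eB: "embedding E B eB" and le: "hom_le B A"
  shows "\<exists>f. hom_on E (eB ` fst B) f \<and> f ` eB ` fst B = eA ` fst A"
proof -
  obtain k where k: "k ` fst B = fst A"
    and k_hom: "\<forall>x\<in>fst B. \<forall>y\<in>fst B. snd B x y \<longrightarrow> snd A (k x) (k y)"
    using le unfolding hom_le_def by blast
  have inv: "inv_into (fst B) eB (eB x) = x" if "x \<in> fst B" for x
    using eB that unfolding embedding_def by (simp add: inv_into_f_f)
  let ?f = "\<lambda>x. eA (k (inv_into (fst B) eB x))"
  have "k x \<in> fst A" if "x \<in> fst B" for x using k that by blast
  then have "hom_on E (eB ` fst B) ?f"
    using eA eB k_hom unfolding hom_on_def embedding_def by (auto simp: inv)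
  moreover have "?f ` eB ` fst B = eA ` fst A"
  proof -
    have "?f ` eB ` fst B = eA ` k ` fst B" by (auto simp: image_image inv)
    then show ?thesis using k by simp
  qed
  ultimately show ?thesis by blast
qed

lemma hom_le_refl: "hom_le A A"
  unfolding hom_le_def by (intro exI[of _ id]) auto

lemma embedding_cocone_if_Hset:
  assumes refl: "hom_reflects_cocones E" and A: "A \<in> Hset E"
    and B: "B \<in> Age E" "embedding E B eB" and le: "hom_le B A"
  shows "\<exists>v. cocone E (eB ` fst B) v"
proof -
  obtain eA v where eA: "embedding E A eA" and v: "cocone E (eA ` fst A) v"
    using A unfolding Hset_def by blast
  obtain f where f: "hom_on E (eB ` fst B) f" "f ` eB ` fst B = eA ` fst A"
    using hom_le_embedded[OF eA B(2) le] by blast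
  have "finite (eB ` fst B)" using B(1) unfolding Age_def is_fgraph_def by simp
  then show ?thesis using refl f v unfolding hom_reflects_cocones_def by metis
qed

lemma hom_reflects_cocones_imp_Hset_Hbar_disjoint:
  "hom_reflects_cocones E \<Longrightarrow> Hset E \<inter> Hbar E = {}"
  using embedding_cocone_if_Hset[OF _ _ _ _ hom_le_refl] unfolding Hbar_def by blast

lemma hom_reflects_cocones_imp_downward_closed:
  assumes "hom_reflects_cocones E"
  shows "downward_closed_in (Age E) (Hset E)"
  unfolding downward_closed_in_def
proof (intro conjI ballI impI)
  show "Hset E \<subseteq> Age E" unfolding Hset_def by blast
next
  fix A B assume "A \<in> Hset E" "B \<in> Age E" "hom_le B A"
  moreover obtain eB where "embedding E B eB" using \<open>B \<in> Age E\<close> unfolding Age_def by blast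
  ultimately show "B \<in> Hset E"
    using embedding_cocone_if_Hset[OF assms] unfolding Hset_def by blast
qed

definition induced_fgraph :: "('a \<Rightarrow> nat) \<Rightarrow> ('a \<Rightarrow> 'a \<Rightarrow> bool) \<Rightarrow> 'a set \<Rightarrow> fgraph" where
  "induced_fgraph enc E W =
     (enc ` W, \<lambda>i j. i \<in> enc ` W \<and> j \<in> enc ` W \<and> E (inv enc i) (inv enc j))"

lemma induced_fgraph:
  assumes enc: "inj enc" and g: "is_graph E" and W: "finite W"
  shows "induced_fgraph enc E W \<in> Age E"
    and "embedding E (induced_fgraph enc E W) (inv enc)"
    and "inv enc ` fst (induced_fgraph enc E W) = W"
proof -
  show emb: "embedding E (induced_fgraph enc E W) (inv enc)"
    unfolding embedding_def induced_fgraph_def using enc by (auto simp: inj_on_def)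
  have "is_fgraph (induced_fgraph enc E W)"
    unfolding is_fgraph_def induced_fgraph_def using g W by (auto simp: is_graph_def)
  then show "induced_fgraph enc E W \<in> Age E" using emb by (auto simp: Age_def)
  show "inv enc ` fst (induced_fgraph enc E W) = W"
    using enc by (simp add: induced_fgraph_def image_image)
qed

lemma hom_le_induced_fgraph:
  assumes enc: "inj enc" and hom: "hom_on E W \<psi>"
  shows "hom_le (induced_fgraph enc E W) (induced_fgraph enc E (\<psi> ` W))"
  unfolding hom_le_def
  by (rule exI[of _ "\<lambda>i. enc (\<psi> (inv enc i))"])
     (use enc hom in \<open>auto simp: induced_fgraph_def hom_on_def image_image\<close>)

lemma Hset_Hbar_conditions_imp_hom_reflects_cocones:
  assumes g: "is_graph E" and ctbl: "countable (UNIV :: 'a set)"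
    and disj: "Hset E \<inter> Hbar E = {}" and dc: "downward_closed_in (Age E) (Hset E)"
  shows "hom_reflects_cocones (E :: 'a \<Rightarrow> 'a \<Rightarrow> bool)"
  unfolding hom_reflects_cocones_def
proof (intro allI impI)
  fix W \<psi> assume W: "finite W" and hom: "hom_on E W \<psi>" and v: "\<exists>v. cocone E (\<psi> ` W) v"
  obtain enc :: "'a \<Rightarrow> nat" where enc: "inj enc" using countableE[OF ctbl] by blast
  let ?A = "induced_fgraph enc E W" and ?B = "induced_fgraph enc E (\<psi> ` W)"
  note A = induced_fgraph[OF enc g W] and B = induced_fgraph[OF enc g finite_imageI[OF W]]
  have "?B \<in> Hset E" unfolding Hset_def using B v by (auto intro!: exI[of _ "inv enc"])
  then have "?A \<in> Hset E"
    using dc A(1) hom_le_induced_fgraph[OF enc hom] unfolding downward_closed_in_def by blast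
  then have "?A \<notin> Hbar E" using disj by blast
  then have "\<exists>v. cocone E (inv enc ` fst ?A) v" unfolding Hbar_def using A(1,2) by blast
  then show "\<exists>u. cocone E W u" using A(3) by simp
qed

lemma hom_reflects_cocones_iff_Hset_Hbar_conditions:
  assumes "is_graph E" and "countable (UNIV :: 'a set)"
  shows "hom_reflects_cocones (E :: 'a \<Rightarrow> 'a \<Rightarrow> bool) \<longleftrightarrow>
           Hset E \<inter> Hbar E = {} \<and> downward_closed_in (Age E) (Hset E)"
  using assms Hset_Hbar_conditions_imp_hom_reflects_cocones
    hom_reflects_cocones_imp_Hset_Hbar_disjoint hom_reflects_cocones_imp_downward_closed
  by blast

subsection \<open>Back and forth\<close>

lemma independent_cocones:
  assumes g: "is_graph E" and refl: "hom_reflects_cocones E"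
    and Z: "finite Z" "z0 \<in> Z" and hom: "hom_on E Z h" and b: "cocone E (h ` Z) b"
  shows "\<exists>I. finite I \<and> card I = n \<and> (\<forall>v\<in>I. cocone E Z v) \<and> (\<forall>v\<in>I. \<forall>w\<in>I. \<not> E v w)"
proof (induction n)
  case 0
  show ?case by (intro exI[of _ "{}"]) auto
next
  case (Suc n)
  then obtain I where I: "finite I" "card I = n" "\<forall>v\<in>I. cocone E Z v"
    "\<forall>v\<in>I. \<forall>w\<in>I. \<not> E v w"
    by blast
  note sym = is_graphD(1)[OF g] and irr = is_graphD(2)[OF g]
  txt \<open>Collapse the independent set \<open>I\<close>, which has no edges to \<open>Z\<close>, onto \<open>h z0\<close>.\<close>
  define \<psi> where "\<psi> = (\<lambda>u. if u \<in> Z then h u else h z0)"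
  have "hom_on E (Z \<union> I) \<psi>"
    unfolding hom_on_def
  proof (intro ballI impI)
    fix x y assume "x \<in> Z \<union> I" "y \<in> Z \<union> I" "E x y"
    then have "x \<in> Z \<and> y \<in> Z" using I(3,4) sym unfolding cocone_def by blast
    then show "E (\<psi> x) (\<psi> y)" using hom \<open>E x y\<close> unfolding \<psi>_def hom_on_def by auto
  qed
  moreover have "cocone E (\<psi> ` (Z \<union> I)) b"
    using b Z(2) unfolding cocone_def \<psi>_def by auto
  ultimately obtain u where u: "cocone E (Z \<union> I) u"
    using refl Z(1) I(1) unfolding hom_reflects_cocones_def by blast
  show ?case
  proof (intro exI[of _ "insert u I"] conjI)
    show "finite (insert u I)" "card (insert u I) = Suc n" using I(1,2) u by (auto simp: cocone_def)
    show "\<forall>v\<in>insert u I. cocone E Z v" using I(3) u by (auto simp: cocone_def)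
    show "\<forall>v\<in>insert u I. \<forall>w\<in>insert u I. \<not> E v w"
      using I(4) u sym irr unfolding cocone_def by blast
  qed
qed

lemma cocone_outside_finite:
  assumes g: "is_graph E" and refl: "hom_reflects_cocones E"
    and Z: "finite Z" "Z \<noteq> {}" and hom: "hom_on E Z h" and b: "cocone E (h ` Z) b"
    and D: "finite D"
  shows "\<exists>x. x \<notin> D \<and> cocone E Z x"
proof -
  obtain z0 where "z0 \<in> Z" using Z(2) by blast
  from independent_cocones[OF g refl Z(1) this hom b, of "Suc (card D)"]
  obtain I where I: "finite I" "card I = Suc (card D)" "\<forall>v\<in>I. cocone E Z v"
    by blast
  have "\<not> I \<subseteq> D"
  proof
    assume "I \<subseteq> D"
    from card_mono[OF D this] show False using I(2) by simp
  qed
  then obtain x where "x \<in> I" "x \<notin> D" by blast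
  then show ?thesis using I(3) by blast
qed

lemma hom_on_insert_update:
  assumes g: "is_graph E" and hom: "hom_on E D h" and x: "x \<notin> D"
    and nbrs: "\<forall>u\<in>D. E x u \<longrightarrow> E (h u) b"
  shows "hom_on E (insert x D) (h(x := b))"
  unfolding hom_on_def
proof (intro ballI impI)
  note sym = is_graphD(1)[OF g] and irr = is_graphD(2)[OF g]
  fix u w assume u: "u \<in> insert x D" and w: "w \<in> insert x D" and uw: "E u w"
  have "u \<noteq> w" using uw irr by blast
  then consider "u \<in> D" "w \<in> D" | "u = x" "w \<in> D" | "u \<in> D" "w = x"
    using u w by blast
  then show "E ((h(x := b)) u) ((h(x := b)) w)"
  proof cases
    case 1
    then show ?thesis using hom uw x unfolding hom_on_def by auto
  next
    case 2
    then show ?thesis using nbrs sym uw x by auto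
  next
    case 3
    then show ?thesis using nbrs sym uw x by auto
  qed
qed

lemma hom_on_extend_range:
  assumes g: "is_graph E" and refl: "hom_reflects_cocones E" and inf: "infinite (UNIV :: 'a set)"
    and D: "finite D" and hom: "hom_on E D h" and b: "b \<notin> h ` D"
  shows "\<exists>x::'a. x \<notin> D \<and> hom_on E (insert x D) (h(x := b))"
proof -
  txt \<open>A new point may be sent to \<open>b\<close> as soon as it is a co-cone over the points of \<open>D\<close>
    whose images are not adjacent to \<open>b\<close>.\<close>
  let ?Z = "{u\<in>D. \<not> E (h u) b}"
  have "\<exists>x. x \<notin> D \<and> cocone E ?Z x"
  proof (cases "?Z = {}")
    case True
    then show ?thesis using ex_new_if_finite[OF inf D] unfolding cocone_def by blast
  next
    case False
    have "cocone E (h ` ?Z) b" using b is_graphD(1)[OF g] unfolding cocone_def by blast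
    then show ?thesis
      using cocone_outside_finite[OF g refl _ False hom_on_subset[OF hom] _ D] D by auto
  qed
  then show ?thesis using hom_on_insert_update[OF g hom] unfolding cocone_def by blast
qed

lemma hom_on_extend_back_and_forth:
  assumes g: "is_graph E" and refl: "hom_reflects_cocones E" and inf: "infinite (UNIV :: 'a set)"
    and HH: "HH_homogeneous E" and D: "finite D" and hom: "hom_on E D h"
  shows "\<exists>D' h'. finite D' \<and> D \<subseteq> D' \<and> (\<forall>x\<in>D. h' x = h x) \<and> hom_on E D' h'
           \<and> (a::'a) \<in> D' \<and> b \<in> h' ` D'"
proof -
  obtain g0 where g0: "is_endo E g0" "\<forall>x\<in>D. g0 x = h x"
    using HH D hom unfolding HH_homogeneous_def by blast
  have D1: "finite (insert a D)" using D by simp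
  have hom1: "hom_on E (insert a D) g0" using g0(1) by (rule is_endo_imp_hom_on)
  show ?thesis
  proof (cases "b \<in> g0 ` insert a D")
    case True
    then show ?thesis using D1 hom1 g0(2) by blast
  next
    case False
    then obtain x where "x \<notin> insert a D" "hom_on E (insert x (insert a D)) (g0(x := b))"
      using hom_on_extend_range[OF g refl inf D1 hom1] by blast
    then show ?thesis
      using D1 g0(2) by (intro exI[of _ "insert x (insert a D)"] exI[of _ "g0(x := b)"]) auto
  qed
qed

lemma surj_endo_of_hom_chain:
  assumes hom: "\<And>n. hom_on E (D n) (h n)"
    and chain: "\<And>n. D n \<subseteq> D (Suc n) \<and> (\<forall>x\<in>D n. h (Suc n) x = h n x)"
    and dom: "\<And>x. \<exists>n. x \<in> D n" and ran: "\<And>y. \<exists>n. y \<in> h n ` D n"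
  shows "\<exists>g. is_endo E g \<and> surj g \<and> (\<forall>x\<in>D 0. g x = h 0 x)"
proof -
  have mono: "D m \<subseteq> D n \<and> (\<forall>x\<in>D m. h n x = h m x)" if "m \<le> n" for m n
    using that
  proof (induction n rule: dec_induct)
    case (step k)
    then show ?case using chain[of k] by auto
  qed simp
  have agree: "h m x = h n x" if "x \<in> D m" "x \<in> D n" for x m n
    using mono[of m n] mono[of n m] that by (cases "m \<le> n") auto
  define g where "g x = h (SOME n. x \<in> D n) x" for x
  have g_eq: "g x = h n x" if "x \<in> D n" for x n
    unfolding g_def using agree[OF someI_ex[OF dom[of x]] that] .
  show ?thesis
  proof (intro exI[of _ g] conjI)
    show "is_endo E g"
      unfolding is_endo_def
    proof (intro allI impI)
      fix x y assume "E x y"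
      obtain m n where "x \<in> D m" "y \<in> D n" using dom by blast
      then have "x \<in> D (max m n)" "y \<in> D (max m n)"
        using mono[of m "max m n"] mono[of n "max m n"] by auto
      then show "E (g x) (g y)" using hom \<open>E x y\<close> unfolding hom_on_def by (simp add: g_eq)
    qed
    show "surj g"
      unfolding surj_def
    proof
      fix y
      obtain n x where "x \<in> D n" "y = h n x" using ran by blast
      then show "\<exists>x. y = g x" by (metis g_eq)
    qed
    show "\<forall>x\<in>D 0. g x = h 0 x" using g_eq by blast
  qed
qed

lemma surj_endo_by_back_and_forth:
  assumes ctbl: "countable (UNIV :: 'a set)"
    and ext: "\<And>D h a b. finite D \<Longrightarrow> hom_on E D h \<Longrightarrow>
      \<exists>D' h'. finite D' \<and> D \<subseteq> D' \<and> (\<forall>x\<in>D. h' x = h x) \<and> hom_on E D' h'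
        \<and> (a::'a) \<in> D' \<and> b \<in> h' ` D'"
    and X: "finite X" and f: "hom_on E X f"
  shows "\<exists>g. is_endo E g \<and> surj g \<and> (\<forall>x\<in>X. g x = f x)"
proof -
  obtain enc :: "'a \<Rightarrow> nat" where enc: "inj enc" using countableE[OF ctbl] by blast
  define P where "P = (\<lambda>(_::nat) (D, h). finite D \<and> hom_on E D h \<and> X \<subseteq> D \<and> (\<forall>x\<in>X. h x = f x))"
  define Q where "Q = (\<lambda>n (D, h) (D', h'). D \<subseteq> D' \<and> (\<forall>x\<in>D. h' x = h x)
    \<and> inv enc n \<in> D' \<and> inv enc n \<in> h' ` D')"
  have "\<exists>s. \<forall>n. P n (s n) \<and> Q n (s n) (s (Suc n))"
  proof (rule dependent_nat_choice)
    show "\<exists>p. P 0 p" using X f unfolding P_def by blast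
  next
    fix p n assume "P n p"
    moreover obtain D0 h0 where p: "p = (D0, h0)" by fastforce
    ultimately obtain D' h' where "finite D'" "D0 \<subseteq> D'" "\<forall>x\<in>D0. h' x = h0 x" "hom_on E D' h'"
      "inv enc n \<in> D'" "inv enc n \<in> h' ` D'"
      using ext[of D0 h0 "inv enc n" "inv enc n"] unfolding P_def by auto
    then have "P (Suc n) (D', h') \<and> Q n p (D', h')"
      using \<open>P n p\<close> unfolding P_def Q_def p by auto
    then show "\<exists>q. P (Suc n) q \<and> Q n p q" by blast
  qed
  then obtain s where s: "\<And>n. P n (s n) \<and> Q n (s n) (s (Suc n))" by blast
  define D where "D n = fst (s n)" for n
  define h where "h n = snd (s n)" for n
  have PQ: "P n (D n, h n) \<and> Q n (D n, h n) (D (Suc n), h (Suc n))" for n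
    using s[of n] by (simp add: D_def h_def)
  have "\<exists>n. x \<in> D n" "\<exists>n. x \<in> h n ` D n" for x
    using PQ[of "enc x"] unfolding Q_def by (auto simp: inv_f_f[OF enc])
  then obtain g where "is_endo E g" "surj g" "\<forall>x\<in>D 0. g x = h 0 x"
    using surj_endo_of_hom_chain[of E D h] PQ unfolding P_def Q_def by auto
  moreover have "X \<subseteq> D 0" "\<forall>x\<in>X. h 0 x = f x" using PQ[of 0] unfolding P_def by auto
  ultimately show ?thesis by (intro exI[of _ g]) auto
qed

lemma HH_and_hom_reflects_cocones_imp_HE:
  assumes "is_graph E" and "countable (UNIV :: 'a set)" and "infinite (UNIV :: 'a set)"
    and "HH_homogeneous E" and "hom_reflects_cocones (E :: 'a \<Rightarrow> 'a \<Rightarrow> bool)"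
  shows "HE_homogeneous E"
  unfolding HE_homogeneous_def
  using surj_endo_by_back_and_forth[OF assms(2) hom_on_extend_back_and_forth[OF assms(1,5,3,4)]]
  by blast

theorem proposition5p8:
  fixes E :: "'a \<Rightarrow> 'a \<Rightarrow> bool"
  assumes "is_graph E"
    and "countable (UNIV :: 'a set)"
    and "infinite (UNIV :: 'a set)"
  shows "HE_homogeneous E \<longleftrightarrow>
           HH_homogeneous E \<and> Hset E \<inter> Hbar E = {} \<and> downward_closed_in (Age E) (Hset E)"
proof -
  have "HE_homogeneous E \<longleftrightarrow> HH_homogeneous E \<and> hom_reflects_cocones E"
    using HE_imp_HH HE_imp_hom_reflects_cocones HH_and_hom_reflects_cocones_imp_HE[OF assms] by blast
  then show ?thesis using hom_reflects_cocones_iff_Hset_Hbar_conditions[OF assms(1,2)] by simp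
qed

end
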